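(* Let $\sigma$ be a signature and $\mathcal F\in\mathbb F_\sigma$. (i) For any generalized causal team $T$ over $\sigma$: $T\models^g\Phi^{\mathcal F}$ iff $\mathcal G\sim\mathcal F$ for all $(s,\mathcal G)\in T$, iff $T^{\mathcal F}=T$. (ii) For any nonempty causal team $T=(T^-,\mathcal G)$ over $\sigma$: $T\models^c\Phi^{\mathcal F}$ iff $\mathcal G\sim\mathcal F$.
   Context: A signature $\sigma=(\mathrm{Dom},\mathrm{Ran})$: $\mathrm{Dom}$ nonempty finite set of variables, each with nonempty finite range $\mathrm{Ran}(X)$; $\mathbf X=\mathbf x$ abbreviates $X_1=x_1\wedge\dots\wedge X_n=x_n$ ($\mathbf x\in\mathrm{Ran}(\mathbf X)=\prod\mathrm{Ran}(X_i)$), inconsistent if it contains $X=x,X=x'$ with $x\neq x'$. $\mathcal{CO}[\sigma]$-formulas: $\alpha::=X=x\mid\neg\alpha\mid\alpha\wedge\alpha\mid\alpha\vee\alpha\mid\mathbf X=\mathbf x\;\Box\!\!\rightarrow\alpha$; $\alpha\supset\beta$ abbreviates $\neg\alpha\vee\beta$. Assignments $s$ on $\mathrm{Dom}$ with $s(X)\in\mathrm{Ran}(X)$. A system of functions $\mathcal F$: for each $V\in\mathrm{En}(\mathcal F)\subseteq\mathrm{Dom}$ a set $PA^{\mathcal F}_V\subseteq\mathrm{Dom}\setminus\{V\}$ and $\mathcal F_V:\mathrm{Ran}(PA^{\mathcal F}_V)\to\mathrm{Ran}(V)$; $\mathrm{Ex}(\mathcal F)=\mathrm{Dom}\setminus\mathrm{En}(\mathcal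 F)$; only recursive systems (acyclic parent graph), forming $\mathbb F_\sigma$. $s$ is compatible with $\mathcal F$ if $s(V)=\mathcal F_V(s(PA^{\mathcal F}_V))$ for $V\in\mathrm{En}(\mathcal F)$; $\mathbb S_\sigma$ = set of compatible pairs $(s,\mathcal F)$. For consistent $\mathbf X=\mathbf x$, $\mathcal F_{\mathbf X=\mathbf x}$ is the restriction to $\mathrm{En}(\mathcal F)\setminus\mathbf X$; $s^{\mathcal F}_{\mathbf X=\mathbf x}$: $X_i\mapsto x_i$, $V\mapsto s(V)$ for $V\in\mathrm{Ex}(\mathcal F)\setminus\mathbf X$, $V\mapsto\mathcal F_V(s^{\mathcal F}_{\mathbf X=\mathbf x}(PA^{\mathcal F}_V))$ for $V\in\mathrm{En}(\mathcal F)\setminus\mathbf X$. Causal team $T=(T^-,\mathcal F)$: $T^-$ a set of assignments compatible with $\mathcal F$; causal subteams $(S^-,\mathcal F)$, $S^-\subseteq T^-$; $T_{\mathbf X=\mathbf x}=(\{s^{\mathcal F}_{\mathbf X=\mathbf x}:s\in T^-\},\mathcal F_{\mathbf X=\mathbf x})$; $\models^c$: $T\models X=x$ iff $s(X)=x$ for all $s\in T^-$; $T\models\neg\alpha$ iff $(\{s\},\mathcal F)\not\models\alpha$ for all $s\in T^-$; $\wedge$ classical; $T\models\alpha\vee\beta$ iff there are causal subteams $T_1,T_2$ with $T_1^-\cup T_2^-=T^-$, $T_1\models\alpha$, $T_2\models\beta$; $T\models\mathbf X=\mathbf x\;\Box\!\!\rightarrow\alpha$ iff $\mathbf X=\mathbf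 x$ inconsistent or $T_{\mathbf X=\mathbf x}\models\alpha$. Generalized causal team: a set $T\subseteq\mathbb S_\sigma$, $T^-=\{s:(s,\mathcal F)\in T\}$, $T_{\mathbf X=\mathbf x}=\{(s^{\mathcal F}_{\mathbf X=\mathbf x},\mathcal F_{\mathbf X=\mathbf x}):(s,\mathcal F)\in T\}$; $\models^g$: same clauses except $T\models\neg\alpha$ iff $\{(s,\mathcal F)\}\not\models\alpha$ for all $(s,\mathcal F)\in T$, and $T\models\alpha\vee\beta$ iff $T=T_1\cup T_2$ with $T_1\models\alpha$, $T_2\models\beta$. $\mathrm{Cn}(\mathcal F)$ = set of $V\in\mathrm{En}(\mathcal F)$ with $\mathcal F_V$ constant. $\mathcal F_V\sim\mathcal G_V$ iff $\mathcal F_V(\mathbf x\mathbf y)=\mathcal G_V(\mathbf x\mathbf z)$ for all $\mathbf x\in\mathrm{Ran}(PA^{\mathcal F}_V\cap PA^{\mathcal G}_V)$, $\mathbf y\in\mathrm{Ran}(PA^{\mathcal F}_V\setminus PA^{\mathcal G}_V)$, $\mathbf z\in\mathrm{Ran}(PA^{\mathcal G}_V\setminus PA^{\mathcal F}_V)$. $\mathcal F\sim\mathcal G$ iff $\mathrm{En}(\mathcal F)\setminus\mathrm{Cn}(\mathcal F)=\mathrm{En}(\mathcal G)\setminus\mathrm{Cn}(\mathcal G)$ and $\mathcal F_V\sim\mathcal G_V$ for each $V$ in this set. $T^{\mathcal F}=\{(s,\mathcal G)\in T:\mathcal G\sim\mathcal F\}$. For $V\in\mathrm{Dom}$ let $\mathbf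 W_V$ list $\mathrm{Dom}\setminus\{V\}$. $\Phi^{\mathcal F}:=\bigwedge_{V\in\mathrm{En}(\mathcal F)\setminus\mathrm{Cn}(\mathcal F)}\eta(V)\wedge\bigwedge_{V\in\mathrm{Dom}\setminus(\mathrm{En}(\mathcal F)\setminus\mathrm{Cn}(\mathcal F))}\xi(V)$, where $\eta(V)$ is the conjunction of all formulas $(\mathbf W=\mathbf w\wedge PA^{\mathcal F}_V=\mathbf p)\;\Box\!\!\rightarrow V=\mathcal F_V(\mathbf p)$ with $\mathbf W$ listing $\mathrm{Dom}\setminus(PA^{\mathcal F}_V\cup\{V\})$, $\mathbf w\in\mathrm{Ran}(\mathbf W)$, $\mathbf p\in\mathrm{Ran}(PA^{\mathcal F}_V)$, and $\xi(V)$ is the conjunction of all formulas $V=v\supset(\mathbf W_V=\mathbf w\;\Box\!\!\rightarrow V=v)$ with $v\in\mathrm{Ran}(V)$, $\mathbf w\in\mathrm{Ran}(\mathbf W_V)$. *)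

theory Defs
  imports Main "HOL-Library.FuncSet"
begin

text \<open>A signature is given by a set Dom of variables (type 'v) and ranges Ran :: 'v => 'a set.
  Assignments are extensional functions in PiE Dom Ran (value undefined outside Dom).\<close>

definition is_sig :: "'v set \<Rightarrow> ('v \<Rightarrow> 'a set) \<Rightarrow> bool" where
  "is_sig Dom Ran \<longleftrightarrow> finite Dom \<and> Dom \<noteq> {} \<and> (\<forall>X\<in>Dom. finite (Ran X) \<and> Ran X \<noteq> {})"

text \<open>A system of functions: endogenous variables, parent sets, and for each endogenous V a function
  on assignments of its parents (extensional functions in PiE (PA V) Ran).\<close>
record ('v, 'a) sys =
  En :: "'v set"
  PA :: "'v \<Rightarrow> 'v set"
  Fn :: "'v \<Rightarrow> ('v \<Rightarrow> 'a) \<Rightarrow> 'a"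

text \<open>The recursive systems of functions over the signature (canonically represented:
  junk values outside the intended domains are fixed to undefined).\<close>
definition FF :: "'v set \<Rightarrow> ('v \<Rightarrow> 'a set) \<Rightarrow> ('v, 'a) sys set" where
  "FF Dom Ran = {F. En F \<subseteq> Dom
     \<and> (\<forall>V\<in>En F. PA F V \<subseteq> Dom - {V})
     \<and> (\<forall>V\<in>En F. \<forall>p\<in>PiE (PA F V) Ran. Fn F V p \<in> Ran V)
     \<and> (\<forall>V\<in>En F. \<forall>p. p \<notin> PiE (PA F V) Ran \<longrightarrow> Fn F V p = undefined)
     \<and> (\<forall>V. V \<notin> En F \<longrightarrow> PA F V = {} \<and> Fn F V = (\<lambda>_. undefined))
     \<and> acyclic {(P, V). V \<in> En F \<and> P \<in> PA F V}}"

definition compat :: "('v, 'a) sys \<Rightarrow> ('v \<Rightarrow> 'a) \<Rightarrow> bool" where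
  "compat F s \<longleftrightarrow> (\<forall>V\<in>En F. s V = Fn F V (restrict s (PA F V)))"

definition SS :: "'v set \<Rightarrow> ('v \<Rightarrow> 'a set) \<Rightarrow> (('v \<Rightarrow> 'a) \<times> ('v, 'a) sys) set" where
  "SS Dom Ran = {(s, F). s \<in> PiE Dom Ran \<and> F \<in> FF Dom Ran \<and> compat F s}"

definition causal_team :: "'v set \<Rightarrow> ('v \<Rightarrow> 'a set) \<Rightarrow> ('v \<Rightarrow> 'a) set \<Rightarrow> ('v, 'a) sys \<Rightarrow> bool" where
  "causal_team Dom Ran S G \<longleftrightarrow> G \<in> FF Dom Ran \<and> (\<forall>s\<in>S. s \<in> PiE Dom Ran \<and> compat G s)"

text \<open>An intervention X = x is a list of variable/value pairs.\<close>
definition consistent :: "('v \<times> 'a) list \<Rightarrow> bool" where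
  "consistent xs \<longleftrightarrow> (\<forall>(X, x)\<in>set xs. \<forall>(Y, y)\<in>set xs. X = Y \<longrightarrow> x = y)"

definition sys_do :: "('v, 'a) sys \<Rightarrow> ('v \<times> 'a) list \<Rightarrow> ('v, 'a) sys" where
  "sys_do F xs = \<lparr>En = En F - fst ` set xs,
     PA = (\<lambda>V. if V \<in> En F - fst ` set xs then PA F V else {}),
     Fn = (\<lambda>V. if V \<in> En F - fst ` set xs then Fn F V else (\<lambda>_. undefined))\<rparr>"

definition asg_do :: "('v, 'a) sys \<Rightarrow> ('v \<times> 'a) list \<Rightarrow> ('v \<Rightarrow> 'a) \<Rightarrow> ('v \<Rightarrow> 'a)" where
  "asg_do F xs s = (THE t. (\<forall>(X, x)\<in>set xs. t X = x)
      \<and> (\<forall>V. V \<notin> En F \<and> V \<notin> fst ` set xs \<longrightarrow> t V = s V)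
      \<and> (\<forall>V\<in>En F - fst ` set xs. t V = Fn F V (restrict t (PA F V))))"

datatype ('v, 'a) fml =
    FAtom 'v 'a
  | FNeg "('v, 'a) fml"
  | FAnd "('v, 'a) fml" "('v, 'a) fml"
  | FOr "('v, 'a) fml" "('v, 'a) fml"
  | FCf "('v \<times> 'a) list" "('v, 'a) fml"

definition FImp :: "('v, 'a) fml \<Rightarrow> ('v, 'a) fml \<Rightarrow> ('v, 'a) fml" where
  "FImp \<alpha> \<beta> = FOr (FNeg \<alpha>) \<beta>"

fun sat_g :: "(('v \<Rightarrow> 'a) \<times> ('v, 'a) sys) set \<Rightarrow> ('v, 'a) fml \<Rightarrow> bool" where
  "sat_g T (FAtom X x) = (\<forall>(s, F)\<in>T. s X = x)"
| "sat_g T (FNeg \<alpha>) = (\<forall>(s, F)\<in>T. \<not> sat_g {(s, F)} \<alpha>)"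
| "sat_g T (FAnd \<alpha> \<beta>) = (sat_g T \<alpha> \<and> sat_g T \<beta>)"
| "sat_g T (FOr \<alpha> \<beta>) = (\<exists>T1 T2. T = T1 \<union> T2 \<and> sat_g T1 \<alpha> \<and> sat_g T2 \<beta>)"
| "sat_g T (FCf xs \<alpha>) = (\<not> consistent xs \<or>
     sat_g ((\<lambda>(s, F). (asg_do F xs s, sys_do F xs)) ` T) \<alpha>)"

fun sat_c :: "('v \<Rightarrow> 'a) set \<Rightarrow> ('v, 'a) sys \<Rightarrow> ('v, 'a) fml \<Rightarrow> bool" where
  "sat_c S G (FAtom X x) = (\<forall>s\<in>S. s X = x)"
| "sat_c S G (FNeg \<alpha>) = (\<forall>s\<in>S. \<not> sat_c {s} G \<alpha>)"
| "sat_c S G (FAnd \<alpha> \<beta>) = (sat_c S G \<alpha> \<and> sat_c S G \<beta>)"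
| "sat_c S G (FOr \<alpha> \<beta>) = (\<exists>S1 S2. S1 \<union> S2 = S \<and> sat_c S1 G \<alpha> \<and> sat_c S2 G \<beta>)"
| "sat_c S G (FCf xs \<alpha>) = (\<not> consistent xs \<or>
     sat_c (asg_do G xs ` S) (sys_do G xs) \<alpha>)"

definition Cn :: "('v \<Rightarrow> 'a set) \<Rightarrow> ('v, 'a) sys \<Rightarrow> 'v set" where
  "Cn Ran F = {V\<in>En F. \<exists>c. \<forall>p\<in>PiE (PA F V) Ran. Fn F V p = c}"

definition fn_equiv :: "('v \<Rightarrow> 'a set) \<Rightarrow> ('v, 'a) sys \<Rightarrow> ('v, 'a) sys \<Rightarrow> 'v \<Rightarrow> bool" where
  "fn_equiv Ran F G V \<longleftrightarrow>
     (\<forall>x\<in>PiE (PA F V \<inter> PA G V) Ran. \<forall>y\<in>PiE (PA F V - PA G V) Ran. \<forall>z\<in>PiE (PA G V - PA F V) Ran.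
        Fn F V (\<lambda>v. if v \<in> PA F V \<inter> PA G V then x v else y v)
      = Fn G V (\<lambda>v. if v \<in> PA F V \<inter> PA G V then x v else z v))"

definition sys_equiv :: "('v \<Rightarrow> 'a set) \<Rightarrow> ('v, 'a) sys \<Rightarrow> ('v, 'a) sys \<Rightarrow> bool" where
  "sys_equiv Ran F G \<longleftrightarrow> En F - Cn Ran F = En G - Cn Ran G
     \<and> (\<forall>V\<in>En F - Cn Ran F. fn_equiv Ran F G V)"

definition team_restr :: "('v \<Rightarrow> 'a set) \<Rightarrow> (('v \<Rightarrow> 'a) \<times> ('v, 'a) sys) set \<Rightarrow> ('v, 'a) sys
    \<Rightarrow> (('v \<Rightarrow> 'a) \<times> ('v, 'a) sys) set" where
  "team_restr Ran T F = {(s, G)\<in>T. sys_equiv Ran G F}"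

text \<open>A fixed enumeration of a finite set of variables (order is irrelevant).\<close>
definition var_list :: "'v set \<Rightarrow> 'v list" where
  "var_list A = (SOME xs. set xs = A \<and> distinct xs)"

definition ivn :: "'v set \<Rightarrow> ('v \<Rightarrow> 'a) \<Rightarrow> ('v \<times> 'a) list" where
  "ivn A w = map (\<lambda>X. (X, w X)) (var_list A)"

fun conj_list :: "('v, 'a) fml list \<Rightarrow> ('v, 'a) fml" where
  "conj_list [] = undefined"
| "conj_list [\<phi>] = \<phi>"
| "conj_list (\<phi> # \<psi>s) = FAnd \<phi> (conj_list \<psi>s)"

definition eta :: "'v set \<Rightarrow> ('v \<Rightarrow> 'a set) \<Rightarrow> ('v, 'a) sys \<Rightarrow> 'v \<Rightarrow> ('v, 'a) fml set" where
  "eta Dom Ran F V = {FCf (ivn (Dom - (PA F V \<union> {V})) w @ ivn (PA F V) p) (FAtom V (Fn F V p)) | w p.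
      w \<in> PiE (Dom - (PA F V \<union> {V})) Ran \<and> p \<in> PiE (PA F V) Ran}"

definition xi :: "'v set \<Rightarrow> ('v \<Rightarrow> 'a set) \<Rightarrow> 'v \<Rightarrow> ('v, 'a) fml set" where
  "xi Dom Ran V = {FImp (FAtom V v) (FCf (ivn (Dom - {V}) w) (FAtom V v)) | v w.
      v \<in> Ran V \<and> w \<in> PiE (Dom - {V}) Ran}"

definition PhiSet :: "'v set \<Rightarrow> ('v \<Rightarrow> 'a set) \<Rightarrow> ('v, 'a) sys \<Rightarrow> ('v, 'a) fml set" where
  "PhiSet Dom Ran F = (\<Union>V\<in>En F - Cn Ran F. eta Dom Ran F V) \<union> (\<Union>V\<in>Dom - (En F - Cn Ran F). xi Dom Ran V)"

definition Phi :: "'v set \<Rightarrow> ('v \<Rightarrow> 'a set) \<Rightarrow> ('v, 'a) sys \<Rightarrow> ('v, 'a) fml" where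
  "Phi Dom Ran F = conj_list (SOME xs. set xs = PhiSet Dom Ran F \<and> distinct xs)"

end

theory Submission
  imports Defs
begin

(* Every conjunct of Phi^F is flat: a team satisfies it iff each of its members does, so the
   theorem reduces to single pairs (s, G).  The conjuncts for a variable V intervene on all
   other variables, and thereby read off the response of V in (s, G) to an arbitrary assignment
   u of the other variables: G_V(u) if V is endogenous in G, and s(V) otherwise.
   The eta-conjuncts force this response to be F_V(u); as F_V is not constant, V must be
   endogenous in G, and G_V and F_V agree as functions of all other variables, which is the
   pointwise form of G_V ~ F_V.  The xi-conjuncts say that the response is always s(V), which by
   compatibility of s with G means that V is exogenous or constant in G.  Together the two
   families say exactly that G ~ F.  A causal team (S, G) behaves as the generalized team
   S x {G}. *)

section \<open>Assignments on subsets of the domain\<close>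

lemma PiE_if_merge:
  "p \<in> PiE A R \<Longrightarrow> w \<in> PiE B R \<Longrightarrow> (\<lambda>X. if X \<in> A then p X else w X) \<in> PiE (A \<union> B) R"
  by (auto simp: PiE_iff extensional_def)

lemma ball_PiE_Un_iff:
  "(\<forall>u\<in>PiE (A \<union> B) R. Q u) \<longleftrightarrow>
    (\<forall>p\<in>PiE A R. \<forall>w\<in>PiE B R. Q (\<lambda>X. if X \<in> A then p X else w X))"
proof (intro iffI ballI)
  fix u assume Q: "\<forall>p\<in>PiE A R. \<forall>w\<in>PiE B R. Q (\<lambda>X. if X \<in> A then p X else w X)"
    and u: "u \<in> PiE (A \<union> B) R"
  have "(\<lambda>X. if X \<in> A then restrict u A X else restrict u B X) = u"
    using u by (auto simp: PiE_iff extensional_def)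
  moreover have "restrict u A \<in> PiE A R" "restrict u B \<in> PiE B R"
    using u by auto
  ultimately show "Q u"
    using Q by metis
qed (simp add: PiE_if_merge)

lemma ex_PiE_extension:
  assumes "A \<subseteq> B" and "q \<in> PiE A R" and "\<forall>X\<in>B. R X \<noteq> {}"
  obtains u where "u \<in> PiE B R" and "restrict u A = q"
proof -
  obtain d where d: "d \<in> PiE (B - A) R"
    using assms(3) by (metis DiffD1 PiE_eq_empty_iff ex_in_conv)
  let ?u = "\<lambda>X. if X \<in> A then q X else d X"
  have "?u \<in> PiE B R"
    using PiE_if_merge[OF assms(2) d] assms(1) by (simp add: Un_absorb1)
  moreover have "restrict ?u A = q"
    using assms(2) by (auto simp: PiE_iff extensional_def)
  ultimately show ?thesis
    by (rule that)
qed

lemma const_on_PiE_iff: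
  assumes "A \<subseteq> B" and "\<forall>X\<in>B. R X \<noteq> {}"
  shows "(\<forall>q\<in>PiE A R. f q = c) \<longleftrightarrow> (\<forall>u\<in>PiE B R. f (restrict u A) = c)"
proof
  assume const: "\<forall>q\<in>PiE A R. f q = c"
  show "\<forall>u\<in>PiE B R. f (restrict u A) = c"
  proof
    fix u assume "u \<in> PiE B R"
    then have "restrict u A \<in> PiE A R"
      using assms(1) by (auto simp: PiE_iff)
    with const show "f (restrict u A) = c" by blast
  qed
next
  assume const: "\<forall>u\<in>PiE B R. f (restrict u A) = c"
  show "\<forall>q\<in>PiE A R. f q = c"
  proof
    fix q assume "q \<in> PiE A R"
    then obtain u where "u \<in> PiE B R" and "restrict u A = q"
      using ex_PiE_extension assms by blast
    with const show "f q = c" by auto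
  qed
qed

section \<open>Intervening on all variables but one\<close>

lemma set_var_list:
  assumes "finite A"
  shows "set (var_list A) = A"
proof -
  have "set (var_list A) = A \<and> distinct (var_list A)"
    unfolding var_list_def by (rule someI_ex) (rule finite_distinct_list[OF assms])
  then show ?thesis ..
qed

lemma set_ivn: "finite A \<Longrightarrow> set (ivn A w) = (\<lambda>X. (X, w X)) ` A"
  by (simp add: ivn_def set_var_list)

lemma consistent_graphI: "(\<And>X x. (X, x) \<in> set xs \<Longrightarrow> x = u X) \<Longrightarrow> consistent xs"
  unfolding consistent_def by auto

lemma FF_En_subset: "F \<in> FF Dom Ran \<Longrightarrow> En F \<subseteq> Dom"
  by (simp add: FF_def)

lemma FF_PA_subset: "F \<in> FF Dom Ran \<Longrightarrow> V \<in> En F \<Longrightarrow> PA F V \<subseteq> Dom - {V}"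
  by (simp add: FF_def)

definition response :: "('v, 'a) sys \<Rightarrow> ('v \<Rightarrow> 'a) \<Rightarrow> 'v \<Rightarrow> ('v \<Rightarrow> 'a) \<Rightarrow> 'a" where
  "response G s V u = (if V \<in> En G then Fn G V (restrict u (PA G V)) else s V)"

lemma asg_do_all_but:
  assumes G: "G \<in> FF Dom Ran"
    and graph: "\<And>X x. (X, x) \<in> set xs \<Longrightarrow> x = u X"
    and covers: "fst ` set xs = Dom - {V}"
  shows "asg_do G xs s V = response G s V u"
proof -
  have En: "En G \<subseteq> Dom" and PA: "V \<in> En G \<Longrightarrow> PA G V \<subseteq> Dom - {V}"
    using FF_En_subset[OF G] FF_PA_subset[OF G] by simp_all
  have parents: "restrict t (PA G V) = restrict u (PA G V)"
    if "V \<in> En G" and "\<forall>X\<in>Dom - {V}. t X = u X" for t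
    using PA that by (auto intro: restrict_ext)
  define t where "t = (\<lambda>X. if X \<in> Dom - {V} then u X else if X = V then response G s V u else s X)"
  let ?solves = "\<lambda>t. (\<forall>(X, x)\<in>set xs. t X = x) \<and> (\<forall>W. W \<notin> En G \<and> W \<notin> fst ` set xs \<longrightarrow> t W = s W)
      \<and> (\<forall>W\<in>En G - fst ` set xs. t W = Fn G W (restrict t (PA G W)))"
  have "?solves t"
  proof (intro conjI)
    show "\<forall>(X, x)\<in>set xs. t X = x"
    proof clarify
      fix X x assume "(X, x) \<in> set xs"
      moreover from this have "X \<in> Dom - {V}"
        using covers by force
      ultimately show "t X = x"
        using graph by (simp add: t_def)
    qed
    show "\<forall>W. W \<notin> En G \<and> W \<notin> fst ` set xs \<longrightarrow> t W = s W"
      using covers by (auto simp: t_def response_def)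
    show "\<forall>W\<in>En G - fst ` set xs. t W = Fn G W (restrict t (PA G W))"
      using En covers parents[of t] by (auto simp: t_def response_def)
  qed
  moreover have "t' = t" if t': "?solves t'" for t'
  proof
    have "\<forall>X\<in>Dom - {V}. t' X = u X"
    proof
      fix X assume "X \<in> Dom - {V}"
      then obtain x where "(X, x) \<in> set xs"
        using covers by (metis imageE prod.collapse)
      then show "t' X = u X"
        using t' graph by auto
    qed
    with t' parents[of t'] covers En show "t' X = t X" for X
      by (cases "X = V") (auto simp: t_def response_def)
  qed
  ultimately have "asg_do G xs s = t"
    unfolding asg_do_def by (rule the_equality)
  then show ?thesis
    by (simp add: t_def)
qed

section \<open>Similarity of systems via responses\<close>

lemma Cn_iff_const_on_PiE:
  assumes sig: "is_sig Dom Ran" and F: "F \<in> FF Dom Ran" and V: "V \<in> En F"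
  shows "V \<in> Cn Ran F \<longleftrightarrow> (\<exists>c. \<forall>u\<in>PiE (Dom - {V}) Ran. Fn F V (restrict u (PA F V)) = c)"
proof -
  have "\<forall>X\<in>Dom - {V}. Ran X \<noteq> {}"
    using sig by (simp add: is_sig_def)
  then have "(\<forall>p\<in>PiE (PA F V) Ran. Fn F V p = c) \<longleftrightarrow>
      (\<forall>u\<in>PiE (Dom - {V}) Ran. Fn F V (restrict u (PA F V)) = c)" for c
    by (rule const_on_PiE_iff[OF FF_PA_subset[OF F V]])
  then show ?thesis
    using V by (simp add: Cn_def)
qed

lemma fn_equiv_iff_agree:
  assumes "PA F V \<subseteq> D" and "PA G V \<subseteq> D" and "\<forall>X\<in>D. Ran X \<noteq> {}"
  shows "fn_equiv Ran G F V \<longleftrightarrow>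
    (\<forall>u\<in>PiE D Ran. Fn G V (restrict u (PA G V)) = Fn F V (restrict u (PA F V)))"
proof
  assume equiv: "fn_equiv Ran G F V"
  show "\<forall>u\<in>PiE D Ran. Fn G V (restrict u (PA G V)) = Fn F V (restrict u (PA F V))"
  proof
    fix u assume u: "u \<in> PiE D Ran"
    let ?I = "PA G V \<inter> PA F V"
    have "restrict u ?I \<in> PiE ?I Ran" "restrict u (PA G V - PA F V) \<in> PiE (PA G V - PA F V) Ran"
      "restrict u (PA F V - PA G V) \<in> PiE (PA F V - PA G V) Ran"
      using u assms(1,2) by (auto simp: PiE_iff)
    moreover have G_args: "(\<lambda>X. if X \<in> ?I then restrict u ?I X else restrict u (PA G V - PA F V) X)
        = restrict u (PA G V)"
      and F_args: "(\<lambda>X. if X \<in> ?I then restrict u ?I X else restrict u (PA F V - PA G V) X)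
        = restrict u (PA F V)"
      by (auto simp: fun_eq_iff)
    ultimately show "Fn G V (restrict u (PA G V)) = Fn F V (restrict u (PA F V))"
      using equiv unfolding fn_equiv_def G_args[symmetric] F_args[symmetric] by blast
  qed
next
  assume agree: "\<forall>u\<in>PiE D Ran. Fn G V (restrict u (PA G V)) = Fn F V (restrict u (PA F V))"
  show "fn_equiv Ran G F V"
    unfolding fn_equiv_def
  proof (intro ballI)
    let ?I = "PA G V \<inter> PA F V"
    fix x y z
    assume x: "x \<in> PiE ?I Ran" and y: "y \<in> PiE (PA G V - PA F V) Ran"
      and z: "z \<in> PiE (PA F V - PA G V) Ran"
    define q where "q = (\<lambda>X. if X \<in> ?I then x X else if X \<in> PA G V then y X else z X)"
    have "q \<in> PiE (PA G V \<union> PA F V) Ran"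
      using x y z by (auto simp: q_def PiE_iff extensional_def)
    moreover have "PA G V \<union> PA F V \<subseteq> D"
      using assms(1,2) by blast
    ultimately obtain u where u: "u \<in> PiE D Ran" and uq: "restrict u (PA G V \<union> PA F V) = q"
      using ex_PiE_extension assms(3) by blast
    have "restrict q A = restrict u A" if "A \<subseteq> PA G V \<union> PA F V" for A
      using that unfolding uq[symmetric] by (simp add: Int_absorb1)
    then have "restrict q (PA G V) = restrict u (PA G V)" "restrict q (PA F V) = restrict u (PA F V)"
      by simp_all
    moreover have "(\<lambda>X. if X \<in> ?I then x X else y X) = restrict q (PA G V)"
      using y by (auto simp: q_def PiE_iff extensional_def fun_eq_iff)
    moreover have "(\<lambda>X. if X \<in> ?I then x X else z X) = restrict q (PA F V)"
      using z by (auto simp: q_def PiE_iff extensional_def fun_eq_iff)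
    ultimately show "Fn G V (\<lambda>X. if X \<in> ?I then x X else y X) = Fn F V (\<lambda>X. if X \<in> ?I then x X else z X)"
      using agree u by simp
  qed
qed

lemma sys_equiv_iff_agree:
  assumes sig: "is_sig Dom Ran" and F: "F \<in> FF Dom Ran" and G: "G \<in> FF Dom Ran"
  shows "sys_equiv Ran G F \<longleftrightarrow>
    (\<forall>V\<in>En F - Cn Ran F. V \<in> En G \<and>
       (\<forall>u\<in>PiE (Dom - {V}) Ran. Fn G V (restrict u (PA G V)) = Fn F V (restrict u (PA F V))))
    \<and> (\<forall>V\<in>Dom - (En F - Cn Ran F). V \<notin> En G - Cn Ran G)"
    (is "_ \<longleftrightarrow> (\<forall>V\<in>_. V \<in> En G \<and> ?agree V) \<and> ?rest")
proof -
  have ne: "\<forall>X\<in>Dom - {V}. Ran X \<noteq> {}" for V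
    using sig by (simp add: is_sig_def)
  have equiv_iff: "fn_equiv Ran G F V \<longleftrightarrow> ?agree V" if "V \<in> En F" "V \<in> En G" for V
    using fn_equiv_iff_agree[OF FF_PA_subset[OF F] FF_PA_subset[OF G] ne] that .
  have Cn_iff: "V \<in> Cn Ran G \<longleftrightarrow> V \<in> Cn Ran F" if "V \<in> En F" "V \<in> En G" "?agree V" for V
    using Cn_iff_const_on_PiE[OF sig F] Cn_iff_const_on_PiE[OF sig G] that by simp
  show ?thesis
  proof
    assume "sys_equiv Ran G F"
    then have same: "En G - Cn Ran G = En F - Cn Ran F"
      and equiv: "\<forall>V\<in>En G - Cn Ran G. fn_equiv Ran G F V"
      by (simp_all add: sys_equiv_def)
    have "V \<in> En G \<and> ?agree V" if "V \<in> En F - Cn Ran F" for V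
      using that same equiv equiv_iff by auto
    moreover have ?rest
      using same by blast
    ultimately show "(\<forall>V\<in>En F - Cn Ran F. V \<in> En G \<and> ?agree V) \<and> ?rest"
      by blast
  next
    assume agree: "(\<forall>V\<in>En F - Cn Ran F. V \<in> En G \<and> ?agree V) \<and> ?rest"
    have "En G - Cn Ran G = En F - Cn Ran F"
    proof
      show "En G - Cn Ran G \<subseteq> En F - Cn Ran F"
        using agree FF_En_subset[OF G] by blast
      show "En F - Cn Ran F \<subseteq> En G - Cn Ran G"
        using agree Cn_iff by auto
    qed
    with agree show "sys_equiv Ran G F"
      using equiv_iff by (auto simp: sys_equiv_def)
  qed
qed

lemma response_eq_Fn_iff:
  assumes sig: "is_sig Dom Ran" and F: "F \<in> FF Dom Ran" and V: "V \<in> En F - Cn Ran F"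
  shows "(\<forall>u\<in>PiE (Dom - {V}) Ran. response G s V u = Fn F V (restrict u (PA F V))) \<longleftrightarrow>
    V \<in> En G \<and> (\<forall>u\<in>PiE (Dom - {V}) Ran. Fn G V (restrict u (PA G V)) = Fn F V (restrict u (PA F V)))"
proof
  assume resp: "\<forall>u\<in>PiE (Dom - {V}) Ran. response G s V u = Fn F V (restrict u (PA F V))"
  have "V \<in> En G"
  proof (rule ccontr)
    assume "V \<notin> En G"
    then have "\<forall>u\<in>PiE (Dom - {V}) Ran. Fn F V (restrict u (PA F V)) = s V"
      using resp by (simp add: response_def)
    then have "V \<in> Cn Ran F"
      using Cn_iff_const_on_PiE[OF sig F] V by blast
    with V show False by simp
  qed
  with resp show "V \<in> En G \<and> (\<forall>u\<in>PiE (Dom - {V}) Ran. Fn G V (restrict u (PA G V)) = Fn F V (restrict u (PA F V)))"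
    by (simp add: response_def)
qed (simp add: response_def)

lemma response_eq_value_iff:
  assumes sig: "is_sig Dom Ran" and sG: "(s, G) \<in> SS Dom Ran" and V: "V \<in> Dom"
  shows "(\<forall>u\<in>PiE (Dom - {V}) Ran. response G s V u = s V) \<longleftrightarrow> V \<notin> En G - Cn Ran G"
proof (cases "V \<in> En G")
  case True
  have G: "G \<in> FF Dom Ran" and s: "s \<in> PiE Dom Ran" and "compat G s"
    using sG by (simp_all add: SS_def)
  then have sV: "s V = Fn G V (restrict s (PA G V))"
    using True by (simp add: compat_def)
  have "restrict s (Dom - {V}) \<in> PiE (Dom - {V}) Ran"
    using s by (simp add: PiE_iff)
  moreover have "Fn G V (restrict (restrict s (Dom - {V})) (PA G V)) = s V"
    using sV FF_PA_subset[OF G True] by (simp add: Int_absorb1)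
  ultimately have "(\<exists>c. \<forall>u\<in>PiE (Dom - {V}) Ran. Fn G V (restrict u (PA G V)) = c) \<longleftrightarrow>
      (\<forall>u\<in>PiE (Dom - {V}) Ran. Fn G V (restrict u (PA G V)) = s V)"
    by metis
  then show ?thesis
    using True Cn_iff_const_on_PiE[OF sig G True] by (simp add: response_def)
qed (simp add: response_def)

lemma sys_equiv_iff_response:
  assumes sig: "is_sig Dom Ran" and F: "F \<in> FF Dom Ran" and sG: "(s, G) \<in> SS Dom Ran"
  shows "sys_equiv Ran G F \<longleftrightarrow>
    (\<forall>V\<in>En F - Cn Ran F. \<forall>u\<in>PiE (Dom - {V}) Ran. response G s V u = Fn F V (restrict u (PA F V)))
    \<and> (\<forall>V\<in>Dom - (En F - Cn Ran F). \<forall>u\<in>PiE (Dom - {V}) Ran. response G s V u = s V)"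
proof -
  have G: "G \<in> FF Dom Ran"
    using sG by (simp add: SS_def)
  have "(\<forall>V\<in>En F - Cn Ran F. V \<in> En G \<and>
       (\<forall>u\<in>PiE (Dom - {V}) Ran. Fn G V (restrict u (PA G V)) = Fn F V (restrict u (PA F V))))
    \<longleftrightarrow> (\<forall>V\<in>En F - Cn Ran F. \<forall>u\<in>PiE (Dom - {V}) Ran. response G s V u = Fn F V (restrict u (PA F V)))"
    by (rule ball_cong[OF refl]) (rule response_eq_Fn_iff[OF sig F, symmetric])
  moreover have "(\<forall>V\<in>Dom - (En F - Cn Ran F). V \<notin> En G - Cn Ran G)
    \<longleftrightarrow> (\<forall>V\<in>Dom - (En F - Cn Ran F). \<forall>u\<in>PiE (Dom - {V}) Ran. response G s V u = s V)"
    by (rule ball_cong[OF refl]) (simp add: response_eq_value_iff[OF sig sG])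
  ultimately show ?thesis
    by (simp add: sys_equiv_iff_agree[OF sig F G])
qed

section \<open>Satisfaction of Phi^F\<close>

lemma sat_g_conj_list: "xs \<noteq> [] \<Longrightarrow> sat_g T (conj_list xs) \<longleftrightarrow> (\<forall>\<phi>\<in>set xs. sat_g T \<phi>)"
  by (induction xs rule: conj_list.induct) auto

lemma finite_PhiSet:
  assumes sig: "is_sig Dom Ran" and F: "F \<in> FF Dom Ran"
  shows "finite (PhiSet Dom Ran F)"
proof -
  have fin: "finite Dom" and fin_Ran: "\<forall>X\<in>Dom. finite (Ran X)"
    using sig by (simp_all add: is_sig_def)
  have "finite (eta Dom Ran F V)" if "V \<in> En F" for V
  proof -
    have "finite (PiE (Dom - (PA F V \<union> {V})) Ran \<times> PiE (PA F V) Ran)"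
      using fin fin_Ran FF_PA_subset[OF F that]
      by (intro finite_cartesian_product finite_PiE) (auto intro: finite_subset)
    moreover have "eta Dom Ran F V \<subseteq> (\<lambda>(w, p). FCf (ivn (Dom - (PA F V \<union> {V})) w @ ivn (PA F V) p) (FAtom V (Fn F V p)))
        ` (PiE (Dom - (PA F V \<union> {V})) Ran \<times> PiE (PA F V) Ran)"
      unfolding eta_def by auto
    ultimately show ?thesis
      by (rule finite_surj)
  qed
  moreover have "finite (xi Dom Ran V)" if "V \<in> Dom" for V
  proof -
    have "finite (Ran V \<times> PiE (Dom - {V}) Ran)"
      using fin fin_Ran that by (intro finite_cartesian_product finite_PiE) auto
    moreover have "xi Dom Ran V \<subseteq> (\<lambda>(v, w). FImp (FAtom V v) (FCf (ivn (Dom - {V}) w) (FAtom V v)))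
        ` (Ran V \<times> PiE (Dom - {V}) Ran)"
      unfolding xi_def by auto
    ultimately show ?thesis
      by (rule finite_surj)
  qed
  ultimately show ?thesis
    using fin FF_En_subset[OF F] unfolding PhiSet_def
    by (intro finite_UnI finite_UN_I) (auto intro: finite_subset)
qed

lemma PhiSet_not_empty:
  assumes sig: "is_sig Dom Ran" and F: "F \<in> FF Dom Ran"
  shows "PhiSet Dom Ran F \<noteq> {}"
proof -
  have ne: "PiE A Ran \<noteq> {}" if "A \<subseteq> Dom" for A
    using sig that by (auto simp: is_sig_def PiE_eq_empty_iff)
  obtain V where V: "V \<in> Dom"
    using sig by (auto simp: is_sig_def)
  show ?thesis
  proof (cases "V \<in> En F - Cn Ran F")
    case True
    with ne[of "Dom - (PA F V \<union> {V})"] ne[of "PA F V"] FF_PA_subset[OF F]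
    have "eta Dom Ran F V \<noteq> {}"
      unfolding eta_def by blast
    with True show ?thesis
      unfolding PhiSet_def by blast
  next
    case False
    from V sig have "Ran V \<noteq> {}"
      by (simp add: is_sig_def)
    with ne[of "Dom - {V}"] have "xi Dom Ran V \<noteq> {}"
      unfolding xi_def by blast
    with False V show ?thesis
      unfolding PhiSet_def by blast
  qed
qed

lemma sat_g_Phi_iff:
  assumes "is_sig Dom Ran" and "F \<in> FF Dom Ran"
  shows "sat_g T (Phi Dom Ran F) \<longleftrightarrow> (\<forall>\<phi>\<in>PhiSet Dom Ran F. sat_g T \<phi>)"
proof -
  let ?xs = "SOME xs. set xs = PhiSet Dom Ran F \<and> distinct xs"
  have "set ?xs = PhiSet Dom Ran F"
    by (rule someI2_ex[OF finite_distinct_list[OF finite_PhiSet[OF assms]]]) simp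
  moreover from this have "?xs \<noteq> []"
    using PhiSet_not_empty[OF assms] by auto
  ultimately show ?thesis
    unfolding Phi_def by (simp add: sat_g_conj_list)
qed

lemma sat_g_FCf_FAtom:
  "sat_g T (FCf xs (FAtom V c)) \<longleftrightarrow> (consistent xs \<longrightarrow> (\<forall>(s, G)\<in>T. asg_do G xs s V = c))"
  by auto

lemma sat_g_FImp_FAtom_FCf:
  "sat_g T (FImp (FAtom V v) (FCf xs (FAtom V v))) \<longleftrightarrow>
    (\<forall>(s, G)\<in>T. s V = v \<longrightarrow> consistent xs \<longrightarrow> asg_do G xs s V = v)"
proof
  assume "sat_g T (FImp (FAtom V v) (FCf xs (FAtom V v)))"
  then obtain T1 T2 where "T = T1 \<union> T2" and "\<forall>(s, G)\<in>T1. s V \<noteq> v"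
    and "consistent xs \<longrightarrow> (\<forall>(s, G)\<in>T2. asg_do G xs s V = v)"
    unfolding FImp_def sat_g.simps(4) sat_g_FCf_FAtom by auto
  then show "\<forall>(s, G)\<in>T. s V = v \<longrightarrow> consistent xs \<longrightarrow> asg_do G xs s V = v"
    by auto
next
  assume "\<forall>(s, G)\<in>T. s V = v \<longrightarrow> consistent xs \<longrightarrow> asg_do G xs s V = v"
  then show "sat_g T (FImp (FAtom V v) (FCf xs (FAtom V v)))"
    unfolding FImp_def sat_g.simps(4) sat_g_FCf_FAtom
    by (intro exI[of _ "{(s, G)\<in>T. s V \<noteq> v}"] exI[of _ "{(s, G)\<in>T. s V = v}"]) auto
qed

lemma sat_g_eta_iff:
  assumes fin: "finite Dom" and F: "F \<in> FF Dom Ran" and V: "V \<in> En F" and T: "T \<subseteq> SS Dom Ran"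
  shows "(\<forall>\<phi>\<in>eta Dom Ran F V. sat_g T \<phi>) \<longleftrightarrow>
    (\<forall>(s, G)\<in>T. \<forall>u\<in>PiE (Dom - {V}) Ran. response G s V u = Fn F V (restrict u (PA F V)))"
proof -
  let ?W = "Dom - (PA F V \<union> {V})" and ?P = "PA F V"
  let ?xs = "\<lambda>w p. ivn ?W w @ ivn ?P p" and ?u = "\<lambda>w p X. if X \<in> ?P then p X else w X"
  have P: "?P \<subseteq> Dom - {V}"
    using FF_PA_subset[OF F V] .
  then have "finite ?P" "finite ?W"
    using fin by (auto intro: finite_subset)
  then have graph: "x = ?u w p X" if "(X, x) \<in> set (?xs w p)" for w p X x
    using that by (auto simp: set_ivn)
  have covers: "fst ` set (?xs w p) = Dom - {V}" for w p
    using \<open>finite ?P\<close> \<open>finite ?W\<close> P by (auto simp: set_ivn image_Un image_image)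
  have cons: "consistent (?xs w p)" for w p
    using graph by (rule consistent_graphI)
  have do: "asg_do G (?xs w p) s V = response G s V (?u w p)" if "(s, G) \<in> T" for s G w p
    using that T by (intro asg_do_all_but[OF _ graph covers]) (auto simp: SS_def)
  have restrict_u: "restrict (?u w p) ?P = p" if "p \<in> PiE ?P Ran" for w p
    using that by (auto simp: PiE_iff extensional_def fun_eq_iff)
  have sat_atom: "sat_g T (FCf (?xs w p) (FAtom V (Fn F V p))) \<longleftrightarrow>
      (\<forall>(s, G)\<in>T. response G s V (?u w p) = Fn F V p)" for w p
    unfolding sat_g_FCf_FAtom using cons do by auto
  have "(\<forall>\<phi>\<in>eta Dom Ran F V. sat_g T \<phi>) \<longleftrightarrow>
      (\<forall>p\<in>PiE ?P Ran. \<forall>w\<in>PiE ?W Ran. sat_g T (FCf (?xs w p) (FAtom V (Fn F V p))))"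
    unfolding eta_def by blast
  also have "\<dots> \<longleftrightarrow> (\<forall>p\<in>PiE ?P Ran. \<forall>w\<in>PiE ?W Ran.
      \<forall>(s, G)\<in>T. response G s V (?u w p) = Fn F V (restrict (?u w p) ?P))"
    unfolding sat_atom by (simp add: restrict_u)
  also have "\<dots> \<longleftrightarrow> (\<forall>u\<in>PiE (?P \<union> ?W) Ran. \<forall>(s, G)\<in>T. response G s V u = Fn F V (restrict u ?P))"
    by (rule ball_PiE_Un_iff[symmetric])
  also have "?P \<union> ?W = Dom - {V}"
    using P by auto
  finally show ?thesis
    by blast
qed

lemma sat_g_xi_iff:
  assumes fin: "finite Dom" and T: "T \<subseteq> SS Dom Ran" and V: "V \<in> Dom"
  shows "(\<forall>\<phi>\<in>xi Dom Ran V. sat_g T \<phi>) \<longleftrightarrow>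
    (\<forall>(s, G)\<in>T. \<forall>u\<in>PiE (Dom - {V}) Ran. response G s V u = s V)"
proof -
  let ?xs = "ivn (Dom - {V})"
  have graph: "x = w X" if "(X, x) \<in> set (?xs w)" for w X x
    using that fin by (auto simp: set_ivn)
  have covers: "fst ` set (?xs w) = Dom - {V}" for w
    using fin by (simp add: set_ivn image_image)
  have cons: "consistent (?xs w)" for w
    using graph by (rule consistent_graphI)
  have do: "asg_do G (?xs w) s V = response G s V w" if "(s, G) \<in> T" for s G w
    using that T by (intro asg_do_all_but[OF _ graph covers]) (auto simp: SS_def)
  have sat_atom: "sat_g T (FImp (FAtom V v) (FCf (?xs w) (FAtom V v))) \<longleftrightarrow>
      (\<forall>(s, G)\<in>T. s V = v \<longrightarrow> response G s V w = v)" for v w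
    unfolding sat_g_FImp_FAtom_FCf by (auto simp: cons do)
  have in_Ran: "s V \<in> Ran V" if "(s, G) \<in> T" for s G
    using that T V by (auto simp: SS_def)
  have "(\<forall>\<phi>\<in>xi Dom Ran V. sat_g T \<phi>) \<longleftrightarrow>
      (\<forall>v\<in>Ran V. \<forall>w\<in>PiE (Dom - {V}) Ran. sat_g T (FImp (FAtom V v) (FCf (?xs w) (FAtom V v))))"
    unfolding xi_def by blast
  also have "\<dots> \<longleftrightarrow> (\<forall>v\<in>Ran V. \<forall>w\<in>PiE (Dom - {V}) Ran. \<forall>(s, G)\<in>T. s V = v \<longrightarrow> response G s V w = v)"
    unfolding sat_atom ..
  also have "\<dots> \<longleftrightarrow> (\<forall>(s, G)\<in>T. \<forall>u\<in>PiE (Dom - {V}) Ran. response G s V u = s V)"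
  proof
    assume "\<forall>v\<in>Ran V. \<forall>w\<in>PiE (Dom - {V}) Ran. \<forall>(s, G)\<in>T. s V = v \<longrightarrow> response G s V w = v"
    then show "\<forall>(s, G)\<in>T. \<forall>u\<in>PiE (Dom - {V}) Ran. response G s V u = s V"
      using in_Ran by fast
  qed fast
  finally show ?thesis .
qed

lemma sat_g_Phi_iff_sys_equiv:
  assumes sig: "is_sig Dom Ran" and F: "F \<in> FF Dom Ran" and T: "T \<subseteq> SS Dom Ran"
  shows "sat_g T (Phi Dom Ran F) \<longleftrightarrow> (\<forall>(s, G)\<in>T. sys_equiv Ran G F)"
proof -
  have fin: "finite Dom"
    using sig by (simp add: is_sig_def)
  have "sat_g T (Phi Dom Ran F) \<longleftrightarrow>
      (\<forall>V\<in>En F - Cn Ran F. \<forall>\<phi>\<in>eta Dom Ran F V. sat_g T \<phi>)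
      \<and> (\<forall>V\<in>Dom - (En F - Cn Ran F). \<forall>\<phi>\<in>xi Dom Ran V. sat_g T \<phi>)"
    unfolding sat_g_Phi_iff[OF sig F] PhiSet_def by blast
  also have "\<dots> \<longleftrightarrow>
      (\<forall>V\<in>En F - Cn Ran F. \<forall>(s, G)\<in>T. \<forall>u\<in>PiE (Dom - {V}) Ran. response G s V u = Fn F V (restrict u (PA F V)))
      \<and> (\<forall>V\<in>Dom - (En F - Cn Ran F). \<forall>(s, G)\<in>T. \<forall>u\<in>PiE (Dom - {V}) Ran. response G s V u = s V)"
    using sat_g_eta_iff[OF fin F _ T] sat_g_xi_iff[OF fin T] by simp
  also have "\<dots> \<longleftrightarrow> (\<forall>(s, G)\<in>T.
      (\<forall>V\<in>En F - Cn Ran F. \<forall>u\<in>PiE (Dom - {V}) Ran. response G s V u = Fn F V (restrict u (PA F V)))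
      \<and> (\<forall>V\<in>Dom - (En F - Cn Ran F). \<forall>u\<in>PiE (Dom - {V}) Ran. response G s V u = s V))"
    by blast
  also have "\<dots> \<longleftrightarrow> (\<forall>(s, G)\<in>T. sys_equiv Ran G F)"
  proof (rule ball_cong[OF refl], clarify)
    fix s G assume "(s, G) \<in> T"
    with T have "(s, G) \<in> SS Dom Ran" by blast
    then show "(\<forall>V\<in>En F - Cn Ran F. \<forall>u\<in>PiE (Dom - {V}) Ran. response G s V u = Fn F V (restrict u (PA F V)))
        \<and> (\<forall>V\<in>Dom - (En F - Cn Ran F). \<forall>u\<in>PiE (Dom - {V}) Ran. response G s V u = s V)
      \<longleftrightarrow> sys_equiv Ran G F"
      by (simp add: sys_equiv_iff_response[OF sig F])
  qed
  finally show ?thesis .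
qed

lemma sat_c_iff_sat_g: "sat_c S G \<phi> \<longleftrightarrow> sat_g ((\<lambda>s. (s, G)) ` S) \<phi>"
proof (induction \<phi> arbitrary: S G)
  case (FOr \<alpha> \<beta>)
  show ?case
  proof
    assume "sat_c S G (FOr \<alpha> \<beta>)"
    then obtain S1 S2 where "S1 \<union> S2 = S" "sat_c S1 G \<alpha>" "sat_c S2 G \<beta>"
      by auto
    with FOr.IH show "sat_g ((\<lambda>s. (s, G)) ` S) (FOr \<alpha> \<beta>)"
      unfolding sat_g.simps
      by (intro exI[of _ "(\<lambda>s. (s, G)) ` S1"] exI[of _ "(\<lambda>s. (s, G)) ` S2"]) auto
  next
    assume "sat_g ((\<lambda>s. (s, G)) ` S) (FOr \<alpha> \<beta>)"
    then obtain T1 T2 where T: "(\<lambda>s. (s, G)) ` S = T1 \<union> T2" "sat_g T1 \<alpha>" "sat_g T2 \<beta>"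
      by auto
    define S1 where "S1 = {s. (s, G) \<in> T1}"
    define S2 where "S2 = {s. (s, G) \<in> T2}"
    have "T1 \<subseteq> (\<lambda>s. (s, G)) ` S" "T2 \<subseteq> (\<lambda>s. (s, G)) ` S"
      using T(1) by auto
    then have "T1 = (\<lambda>s. (s, G)) ` S1" "T2 = (\<lambda>s. (s, G)) ` S2"
      unfolding S1_def S2_def by force+
    moreover have "S1 \<union> S2 = S"
      using T(1) unfolding S1_def S2_def by auto
    ultimately show "sat_c S G (FOr \<alpha> \<beta>)"
      using T FOr.IH by auto
  qed
next
  case (FCf xs \<alpha>)
  have "(\<lambda>(s, F). (asg_do F xs s, sys_do F xs)) ` (\<lambda>s. (s, G)) ` S
      = (\<lambda>s. (s, sys_do G xs)) ` asg_do G xs ` S"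
    by (simp add: image_image)
  with FCf.IH show ?case
    by simp
qed auto

theorem theorem3p4:
  fixes Dom :: "'v set" and Ran :: "'v \<Rightarrow> 'a set" and F :: "('v, 'a) sys"
  assumes "is_sig Dom Ran" and "F \<in> FF Dom Ran"
  shows "(\<forall>T. T \<subseteq> SS Dom Ran \<longrightarrow>
            (sat_g T (Phi Dom Ran F) \<longleftrightarrow> (\<forall>(s, G)\<in>T. sys_equiv Ran G F))
          \<and> ((\<forall>(s, G)\<in>T. sys_equiv Ran G F) \<longleftrightarrow> team_restr Ran T F = T))
       \<and> (\<forall>S G. S \<noteq> {} \<and> causal_team Dom Ran S G \<longrightarrow>
            (sat_c S G (Phi Dom Ran F) \<longleftrightarrow> sys_equiv Ran G F))"
proof (intro conjI allI impI)
  fix T assume T: "T \<subseteq> SS Dom Ran"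
  show "sat_g T (Phi Dom Ran F) \<longleftrightarrow> (\<forall>(s, G)\<in>T. sys_equiv Ran G F)"
    by (rule sat_g_Phi_iff_sys_equiv[OF assms T])
  show "(\<forall>(s, G)\<in>T. sys_equiv Ran G F) \<longleftrightarrow> team_restr Ran T F = T"
    unfolding team_restr_def by blast
next
  fix S G assume S: "S \<noteq> {} \<and> causal_team Dom Ran S G"
  then have "(\<lambda>s. (s, G)) ` S \<subseteq> SS Dom Ran"
    by (auto simp: causal_team_def SS_def)
  from sat_g_Phi_iff_sys_equiv[OF assms this] S
  show "sat_c S G (Phi Dom Ran F) \<longleftrightarrow> sys_equiv Ran G F"
    by (auto simp: sat_c_iff_sat_g)
qed

end
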